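(* Let $m\ge 3$ and $n\ge 5$ be integers, let $\Gamma=C_m\Box C_n$ with vertex set $\{0,\dots,m-1\}\times\{0,\dots,n-1\}$, and let $S$ be a disjunctive dominating set of $\Gamma$. For $j\in\mathbb Z$ let $x_j=|S\cap T_j|$, where $T_j=\{(i,j')\,:\,0\le i\le m-1\}$ with $j'\equiv j\pmod n$, $0\le j'\le n-1$ (so indices are read modulo $n$). Then for every $j=0,1,\dots,n-1$, $$x_{j-2}+4x_{j-1}+8x_j+4x_{j+1}+x_{j+2}\ge 2m.$$
   Context: $C_k$ denotes the cycle with vertex set $\{0,\dots,k-1\}$, where $i,j$ are adjacent iff $i-j\equiv\pm1\pmod k$. $G\Box H$ is the Cartesian product: vertex set $V(G)\times V(H)$, with $(g,h)\sim(g',h')$ iff either $g=g'$ and $hh'\in E(H)$, or $h=h'$ and $gg'\in E(G)$. For a graph $\Gamma$ and vertex $v$, $\Gamma(v)$ is the set of vertices at distance $1$ from $v$ and $\Gamma_2(v)$ the set at distance exactly $2$. A set $S\subseteq V(\Gamma)$ is a disjunctive dominating set if every vertex $v\notin S$ satisfies $|\Gamma(v)\cap S|\ge 1$ or $|\Gamma_2(v)\cap S|\ge 2$. *)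

theory Defs
  imports Main
begin

definition cycle_adj :: "nat \<Rightarrow> nat \<Rightarrow> nat \<Rightarrow> bool" where
  "cycle_adj k i j \<longleftrightarrow> i < k \<and> j < k \<and> ((i + 1) mod k = j \<or> (j + 1) mod k = i)"

definition cycle_verts :: "nat \<Rightarrow> nat set" where
  "cycle_verts k = {0..<k}"

definition cart_adj :: "('a \<Rightarrow> 'a \<Rightarrow> bool) \<Rightarrow> ('b \<Rightarrow> 'b \<Rightarrow> bool) \<Rightarrow> ('a \<times> 'b) \<Rightarrow> ('a \<times> 'b) \<Rightarrow> bool" where
  "cart_adj EG EH p q \<longleftrightarrow>
     (fst p = fst q \<and> EH (snd p) (snd q)) \<or> (snd p = snd q \<and> EG (fst p) (fst q))"

fun walk_len :: "'a set \<Rightarrow> ('a \<Rightarrow> 'a \<Rightarrow> bool) \<Rightarrow> nat \<Rightarrow> 'a \<Rightarrow> 'a \<Rightarrow> bool" where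
  "walk_len V E 0 u v \<longleftrightarrow> u \<in> V \<and> u = v"
| "walk_len V E (Suc k) u v \<longleftrightarrow> u \<in> V \<and> (\<exists>w. E u w \<and> walk_len V E k w v)"

definition at_dist :: "'a set \<Rightarrow> ('a \<Rightarrow> 'a \<Rightarrow> bool) \<Rightarrow> nat \<Rightarrow> 'a \<Rightarrow> 'a \<Rightarrow> bool" where
  "at_dist V E d u v \<longleftrightarrow> walk_len V E d u v \<and> (\<forall>k<d. \<not> walk_len V E k u v)"

definition nbhd :: "'a set \<Rightarrow> ('a \<Rightarrow> 'a \<Rightarrow> bool) \<Rightarrow> nat \<Rightarrow> 'a \<Rightarrow> 'a set" where
  "nbhd V E d v = {u \<in> V. at_dist V E d v u}"

definition disj_dom_set :: "'a set \<Rightarrow> ('a \<Rightarrow> 'a \<Rightarrow> bool) \<Rightarrow> 'a set \<Rightarrow> bool" where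
  "disj_dom_set V E S \<longleftrightarrow> S \<subseteq> V \<and>
     (\<forall>v \<in> V - S. card (nbhd V E 1 v \<inter> S) \<ge> 1 \<or> card (nbhd V E 2 v \<inter> S) \<ge> 2)"

definition torus_verts :: "nat \<Rightarrow> nat \<Rightarrow> (nat \<times> nat) set" where
  "torus_verts m n = cycle_verts m \<times> cycle_verts n"

definition torus_adj :: "nat \<Rightarrow> nat \<Rightarrow> (nat \<times> nat) \<Rightarrow> (nat \<times> nat) \<Rightarrow> bool" where
  "torus_adj m n = cart_adj (cycle_adj m) (cycle_adj n)"

definition col :: "nat \<Rightarrow> nat \<Rightarrow> int \<Rightarrow> (nat \<times> nat) set" where
  "col m n j = {(i, nat (j mod int n)) | i. i < m}"

end

theory Submission
  imports Defs
begin

(* For v outside S, disjunctive domination gives |N(v) \<inter> S| \<ge> 1 or |N\<^sub>2(v) \<inter> S| \<ge> 2, so every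
   vertex satisfies 2 [v \<in> S] + 2 |N(v) \<inter> S| + |N\<^sub>2(v) \<inter> S| \<ge> 2.  On the torus N(v) and N\<^sub>2(v)
   lie among the translates of v by the 4 unit offsets and the 8 offsets of length two.  Summing the
   bound over the m vertices of column T\<^sub>j, each translation permutes the rows, so a vertex of S in
   column j + k is counted 8, 4, 1 times for |k| = 0, 1, 2; this gives the inequality. *)

definition cyc_shift :: "nat \<Rightarrow> nat \<Rightarrow> int \<Rightarrow> nat" where
  "cyc_shift k a d = nat ((int a + d) mod int k)"

lemma cyc_shift_less: "0 < k \<Longrightarrow> cyc_shift k a d < k"
  by (simp add: cyc_shift_def nat_less_iff)

lemma cyc_shift_0: "a < k \<Longrightarrow> cyc_shift k a 0 = a"
  by (simp add: cyc_shift_def)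

lemma cyc_shift_shift: "0 < k \<Longrightarrow> cyc_shift k (cyc_shift k a d) e = cyc_shift k a (d + e)"
  by (simp add: cyc_shift_def mod_add_left_eq add.assoc)

lemma cycle_adj_imp_cyc_shift:
  assumes "cycle_adj k i j"
  shows "j = cyc_shift k i 1 \<or> j = cyc_shift k i (-1)"
proof -
  have "j < k" using assms by (auto simp: cycle_adj_def)
  from assms consider "(i + 1) mod k = j" | "(j + 1) mod k = i"
    by (auto simp: cycle_adj_def)
  then show ?thesis
  proof cases
    case 1
    then have "int j = (int i + 1) mod int k" by (auto simp: zmod_int add.commute)
    then show ?thesis unfolding cyc_shift_def by (metis nat_int)
  next
    case 2
    then have "int i = (int j + 1) mod int k" by (auto simp: zmod_int add.commute)
    then have "(int i - 1) mod int k = int j" using \<open>j < k\<close> by (simp add: mod_diff_left_eq)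
    then show ?thesis by (simp add: cyc_shift_def)
  qed
qed

lemma sum_cyc_shift: "0 < k \<Longrightarrow> (\<Sum>a<k. g (cyc_shift k a d)) = (\<Sum>a<k. g a)"
  by (rule sum.reindex_bij_witness[where i="\<lambda>a. cyc_shift k a (-d)" and j="\<lambda>a. cyc_shift k a d"])
    (auto simp: cyc_shift_shift cyc_shift_0 cyc_shift_less)

lemma card_image_set_Int_le_sum_list:
  "card (f ` set xs \<inter> S) \<le> (\<Sum>x\<leftarrow>xs. of_bool (f x \<in> S))"
proof (induction xs)
  case (Cons x xs)
  have "card (f ` set (x # xs) \<inter> S) \<le> of_bool (f x \<in> S) + card (f ` set xs \<inter> S)"
  proof (cases "f x \<in> S")
    case True
    then have "f ` set (x # xs) \<inter> S = insert (f x) (f ` set xs \<inter> S)" by auto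
    then show ?thesis using True by (simp add: card_insert_if)
  qed auto
  with Cons.IH show ?case by simp
qed simp

lemma card_Int_le_sum_list_of_bool:
  assumes "A \<subseteq> f ` set xs"
  shows "card (A \<inter> S) \<le> (\<Sum>x\<leftarrow>xs. of_bool (f x \<in> S))"
proof -
  have "card (A \<inter> S) \<le> card (f ` set xs \<inter> S)"
    using assms by (intro card_mono) auto
  also have "\<dots> \<le> (\<Sum>x\<leftarrow>xs. of_bool (f x \<in> S))"
    by (rule card_image_set_Int_le_sum_list)
  finally show ?thesis .
qed

lemma disj_dom_set_local_bound:
  assumes "disj_dom_set V E S" and "v \<in> V"
  shows "2 \<le> 2 * of_bool (v \<in> S) + 2 * card (nbhd V E 1 v \<inter> S) + card (nbhd V E 2 v \<inter> S)"
proof (cases "v \<in> S")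
  case False
  then have "1 \<le> card (nbhd V E 1 v \<inter> S) \<or> 2 \<le> card (nbhd V E 2 v \<inter> S)"
    using assms unfolding disj_dom_set_def by blast
  then show ?thesis by linarith
qed simp

definition torus_shift :: "nat \<Rightarrow> nat \<Rightarrow> nat \<times> nat \<Rightarrow> int \<times> int \<Rightarrow> nat \<times> nat" where
  "torus_shift m n v \<delta> = (cyc_shift m (fst v) (fst \<delta>), cyc_shift n (snd v) (snd \<delta>))"

(* Offsets are kept in lists and counted with multiplicity: for small m or n two offsets may
   yield the same vertex, and only an upper bound on the neighbourhood counts is needed. *)
definition torus_unit_offsets :: "(int \<times> int) list" where
  "torus_unit_offsets = [(1, 0), (-1, 0), (0, 1), (0, -1)]"

definition torus_dist2_offsets :: "(int \<times> int) list" where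
  "torus_dist2_offsets = [(2, 0), (-2, 0), (0, 2), (0, -2), (1, 1), (1, -1), (-1, 1), (-1, -1)]"

lemma torus_shift_0:
  "v \<in> torus_verts m n \<Longrightarrow> torus_shift m n v (0, 0) = v"
  by (cases v) (simp add: torus_shift_def torus_verts_def cycle_verts_def cyc_shift_0)

lemma torus_shift_shift:
  assumes "0 < m" and "0 < n"
  shows "torus_shift m n (torus_shift m n v \<delta>) \<epsilon> = torus_shift m n v (fst \<delta> + fst \<epsilon>, snd \<delta> + snd \<epsilon>)"
  using assms by (simp add: torus_shift_def cyc_shift_shift)

lemma torus_adj_imp_torus_shift:
  assumes "torus_adj m n v u" and "v \<in> torus_verts m n"
  shows "\<exists>\<delta>\<in>set torus_unit_offsets. u = torus_shift m n v \<delta>"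
proof -
  from assms(1) consider "fst v = fst u" "cycle_adj n (snd v) (snd u)"
    | "snd v = snd u" "cycle_adj m (fst v) (fst u)"
    unfolding torus_adj_def cart_adj_def by blast
  then show ?thesis
  proof cases
    case 1
    then have "u = torus_shift m n v (0, 1) \<or> u = torus_shift m n v (0, -1)"
      using cycle_adj_imp_cyc_shift torus_shift_0[OF assms(2)]
      by (auto simp: torus_shift_def prod_eq_iff)
    then show ?thesis by (auto simp: torus_unit_offsets_def)
  next
    case 2
    then have "u = torus_shift m n v (1, 0) \<or> u = torus_shift m n v (-1, 0)"
      using cycle_adj_imp_cyc_shift torus_shift_0[OF assms(2)]
      by (auto simp: torus_shift_def prod_eq_iff)
    then show ?thesis by (auto simp: torus_unit_offsets_def)
  qed
qed

lemma torus_unit_offsets_add: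
  assumes "\<delta> \<in> set torus_unit_offsets" and "\<epsilon> \<in> set torus_unit_offsets"
  shows "(fst \<delta> + fst \<epsilon>, snd \<delta> + snd \<epsilon>) = (0, 0)
    \<or> (fst \<delta> + fst \<epsilon>, snd \<delta> + snd \<epsilon>) \<in> set torus_dist2_offsets"
  using assms unfolding torus_unit_offsets_def torus_dist2_offsets_def
  by (simp only: list.set insert_iff empty_iff) (elim disjE; simp)

lemma torus_nbhd_1_subset:
  "nbhd (torus_verts m n) (torus_adj m n) 1 v \<subseteq> torus_shift m n v ` set torus_unit_offsets"
proof
  fix u
  assume "u \<in> nbhd (torus_verts m n) (torus_adj m n) 1 v"
  then have "v \<in> torus_verts m n" "torus_adj m n v u"
    by (auto simp: nbhd_def at_dist_def)
  then show "u \<in> torus_shift m n v ` set torus_unit_offsets"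
    using torus_adj_imp_torus_shift by blast
qed

lemma torus_nbhd_2_subset:
  "nbhd (torus_verts m n) (torus_adj m n) 2 v \<subseteq> torus_shift m n v ` set torus_dist2_offsets"
proof
  fix u
  assume "u \<in> nbhd (torus_verts m n) (torus_adj m n) 2 v"
  then have walk: "walk_len (torus_verts m n) (torus_adj m n) (Suc (Suc 0)) v u"
    and not_walk: "\<not> walk_len (torus_verts m n) (torus_adj m n) 0 v u"
    by (auto simp: nbhd_def at_dist_def numeral_2_eq_2)
  from walk obtain w where v: "v \<in> torus_verts m n" and "torus_adj m n v w"
    and "w \<in> torus_verts m n" and "torus_adj m n w u"
    by auto
  then obtain \<delta> \<epsilon> where \<delta>: "\<delta> \<in> set torus_unit_offsets" "w = torus_shift m n v \<delta>"
    and \<epsilon>: "\<epsilon> \<in> set torus_unit_offsets" "u = torus_shift m n w \<epsilon>"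
    using torus_adj_imp_torus_shift by metis
  have "0 < m" "0 < n"
    using v by (auto simp: torus_verts_def cycle_verts_def)
  then have u: "u = torus_shift m n v (fst \<delta> + fst \<epsilon>, snd \<delta> + snd \<epsilon>)"
    using \<delta> \<epsilon> torus_shift_shift by blast
  moreover have "u \<noteq> v"
    using not_walk v by auto
  then have "(fst \<delta> + fst \<epsilon>, snd \<delta> + snd \<epsilon>) \<noteq> (0, 0)"
    using u torus_shift_0[OF v] by metis
  then have "(fst \<delta> + fst \<epsilon>, snd \<delta> + snd \<epsilon>) \<in> set torus_dist2_offsets"
    using torus_unit_offsets_add[OF \<delta>(1) \<epsilon>(1)] by blast
  ultimately show "u \<in> torus_shift m n v ` set torus_dist2_offsets" by blast
qed

definition torus_dom_count :: "nat \<Rightarrow> nat \<Rightarrow> (nat \<times> nat) set \<Rightarrow> nat \<times> nat \<Rightarrow> nat" where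
  "torus_dom_count m n S v = 2 * of_bool (v \<in> S)
    + 2 * (\<Sum>\<delta>\<leftarrow>torus_unit_offsets. of_bool (torus_shift m n v \<delta> \<in> S))
    + (\<Sum>\<delta>\<leftarrow>torus_dist2_offsets. of_bool (torus_shift m n v \<delta> \<in> S))"

lemma torus_dom_count_ge_2:
  assumes "disj_dom_set (torus_verts m n) (torus_adj m n) S" and "v \<in> torus_verts m n"
  shows "2 \<le> torus_dom_count m n S v"
  unfolding torus_dom_count_def
  using disj_dom_set_local_bound[OF assms]
    card_Int_le_sum_list_of_bool[OF torus_nbhd_1_subset, of m n v S]
    card_Int_le_sum_list_of_bool[OF torus_nbhd_2_subset, of m n v S]
  by linarith

lemma sum_row_eq_card_col:
  assumes "c = nat (t mod int n)"
  shows "(\<Sum>a<m. of_bool ((a, c) \<in> S)) = card (S \<inter> col m n t)"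
proof -
  have "S \<inter> col m n t = (\<lambda>a. (a, c)) ` ({..<m} \<inter> {a. (a, c) \<in> S})"
    using assms by (auto simp: col_def)
  then show ?thesis by (simp add: card_image inj_on_def)
qed

lemma sum_torus_shift_row:
  assumes "0 < m"
  shows "(\<Sum>a<m. of_bool (torus_shift m n (a, b) \<delta> \<in> S)) = card (S \<inter> col m n (int b + snd \<delta>))"
proof -
  have "(\<Sum>a<m. of_bool (torus_shift m n (a, b) \<delta> \<in> S))
      = (\<Sum>a<m. of_bool ((a, cyc_shift n b (snd \<delta>)) \<in> S))"
    using sum_cyc_shift[OF assms, of "\<lambda>a. of_bool ((a, cyc_shift n b (snd \<delta>)) \<in> S)"]
    by (simp add: torus_shift_def)
  also have "\<dots> = card (S \<inter> col m n (int b + snd \<delta>))"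
    by (rule sum_row_eq_card_col) (simp add: cyc_shift_def)
  finally show ?thesis .
qed

lemma sum_torus_dom_count_column:
  fixes S :: "(nat \<times> nat) set"
  assumes "0 < m" and "b < n"
  defines "x \<equiv> \<lambda>t. card (S \<inter> col m n t)"
  shows "(\<Sum>a<m. torus_dom_count m n S (a, b))
    = x (int b - 2) + 4 * x (int b - 1) + 8 * x (int b) + 4 * x (int b + 1) + x (int b + 2)"
proof -
  have self: "(\<Sum>a<m. of_bool ((a, b) \<in> S)) = x (int b)"
    unfolding x_def using assms(2) by (intro sum_row_eq_card_col) simp
  have rows: "(\<Sum>a<m. of_bool (torus_shift m n (a, b) \<delta> \<in> S)) = x (int b + snd \<delta>)" for \<delta>
    unfolding x_def using assms(1) by (rule sum_torus_shift_row)
  show ?thesis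
    unfolding torus_dom_count_def torus_unit_offsets_def torus_dist2_offsets_def
    by (simp only: list.map sum_list_simps sum.distrib add_0_right flip: sum_distrib_left)
      (simp add: self rows)
qed

theorem lemma1:
  fixes m n :: nat and S :: "(nat \<times> nat) set" and j :: nat
  assumes "m \<ge> 3" and "n \<ge> 5"
    and "disj_dom_set (torus_verts m n) (torus_adj m n) S"
    and "j < n"
  shows "(let x = (\<lambda>t::int. int (card (S \<inter> col m n t))) in
           x (int j - 2) + 4 * x (int j - 1) + 8 * x (int j) + 4 * x (int j + 1) + x (int j + 2))
         \<ge> 2 * int m"
proof -
  let ?x = "\<lambda>t. card (S \<inter> col m n t)"
  have "0 < m" using assms(1) by simp
  have "2 * m = (\<Sum>a<m. 2::nat)" by simp
  also have "\<dots> \<le> (\<Sum>a<m. torus_dom_count m n S (a, j))"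
    using assms(4)
    by (intro sum_mono torus_dom_count_ge_2[OF assms(3)]) (simp add: torus_verts_def cycle_verts_def)
  also have "\<dots> = ?x (int j - 2) + 4 * ?x (int j - 1) + 8 * ?x (int j) + 4 * ?x (int j + 1) + ?x (int j + 2)"
    using \<open>0 < m\<close> assms(4) by (rule sum_torus_dom_count_column)
  finally show ?thesis
    unfolding Let_def by linarith
qed

end
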